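(* Let $\Pi$ be a group and let $T$ be a function on $\Pi$ with values in an integral domain whose characteristic is not $2$. Then the following two sets of relations are equivalent: (P): (P1) $T(1)=2$; (P2) $T(g_1g_2)=T(g_2g_1)$; (P3) $T(g_1)T(g_2)T(g_3)+T(g_1g_2g_3)+T(g_1g_3g_2)-T(g_1g_2)T(g_3)-T(g_2g_3)T(g_1)-T(g_1g_3)T(g_2)=0$; (P4) $T(g)^2-T(g^2)=2$, for all $g,g_1,g_2,g_3\in\Pi$; (C): (C1) $T(1)=2$; (C2) $T(g_1)T(g_2)=T(g_1g_2)+T(g_1^{-1}g_2)$, for all $g_1,g_2\in\Pi$. *)

theory Defs
  imports "HOL-Algebra.Group"
begin

definition rel_P :: "('g, 'm) monoid_scheme \<Rightarrow> ('g \<Rightarrow> 'b::idom) \<Rightarrow> bool" where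
  "rel_P G T \<longleftrightarrow>
     T \<one>\<^bsub>G\<^esub> = 2
   \<and> (\<forall>g1\<in>carrier G. \<forall>g2\<in>carrier G. T (g1 \<otimes>\<^bsub>G\<^esub> g2) = T (g2 \<otimes>\<^bsub>G\<^esub> g1))
   \<and> (\<forall>g1\<in>carrier G. \<forall>g2\<in>carrier G. \<forall>g3\<in>carrier G.
        T g1 * T g2 * T g3 + T (g1 \<otimes>\<^bsub>G\<^esub> g2 \<otimes>\<^bsub>G\<^esub> g3) + T (g1 \<otimes>\<^bsub>G\<^esub> g3 \<otimes>\<^bsub>G\<^esub> g2)
        - T (g1 \<otimes>\<^bsub>G\<^esub> g2) * T g3 - T (g2 \<otimes>\<^bsub>G\<^esub> g3) * T g1 - T (g1 \<otimes>\<^bsub>G\<^esub> g3) * T g2 = 0)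
   \<and> (\<forall>g\<in>carrier G. (T g)^2 - T (g \<otimes>\<^bsub>G\<^esub> g) = 2)"

definition rel_C :: "('g, 'm) monoid_scheme \<Rightarrow> ('g \<Rightarrow> 'b::idom) \<Rightarrow> bool" where
  "rel_C G T \<longleftrightarrow>
     T \<one>\<^bsub>G\<^esub> = 2
   \<and> (\<forall>g1\<in>carrier G. \<forall>g2\<in>carrier G.
        T g1 * T g2 = T (g1 \<otimes>\<^bsub>G\<^esub> g2) + T (inv\<^bsub>G\<^esub> g1 \<otimes>\<^bsub>G\<^esub> g2))"

end

theory Submission
  imports Defs
begin

text \<open>
  (C) \<Rightarrow> (P): taking \<open>g\<^sub>2 = \<one>\<close> in (C2) makes \<open>T\<close> inversion invariant, and comparing (C2) for
  \<open>(g\<^sub>1, g\<^sub>2)\<close> and \<open>(g\<^sub>2, g\<^sub>1)\<close> makes it a class function; (P3) is then obtained by expanding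
  \<open>T(a) T(b) T(c)\<close> and \<open>T(ca) T(b)\<close>, \<open>T(ba) T(c)\<close> with (C2), and (P4) is (C2) for \<open>g\<^sub>1 = g\<^sub>2\<close>.
  (P) \<Rightarrow> (C): (P3) for \<open>(x, x, x\<inverse>z)\<close>, simplified with (P2) and (P4), says that twice the
  defect of (C2) at \<open>(x, z)\<close> vanishes; here the characteristic is needed.
\<close>

context group
begin

lemma rel_P_imp_rel_C:
  fixes T :: "'a \<Rightarrow> 'c::idom"
  assumes P: "rel_P G T" and two: "(2::'c) \<noteq> 0"
  shows "rel_C G T"
proof -
  have P1: "T \<one> = 2"
    and P2: "\<And>a b. a \<in> carrier G \<Longrightarrow> b \<in> carrier G \<Longrightarrow> T (a \<otimes> b) = T (b \<otimes> a)"
    and P3: "\<And>g1 g2 g3. g1 \<in> carrier G \<Longrightarrow> g2 \<in> carrier G \<Longrightarrow> g3 \<in> carrier G \<Longrightarrow>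
        T g1 * T g2 * T g3 + T (g1 \<otimes> g2 \<otimes> g3) + T (g1 \<otimes> g3 \<otimes> g2)
        - T (g1 \<otimes> g2) * T g3 - T (g2 \<otimes> g3) * T g1 - T (g1 \<otimes> g3) * T g2 = 0"
    and P4: "\<And>g. g \<in> carrier G \<Longrightarrow> (T g)^2 - T (g \<otimes> g) = 2"
    using P unfolding rel_P_def by auto
  have "T x * T z = T (x \<otimes> z) + T (inv x \<otimes> z)" if x: "x \<in> carrier G" and z: "z \<in> carrier G" for x z
  proof -
    define w where "w = inv x \<otimes> z"
    have w: "w \<in> carrier G" using x z by (simp add: w_def)
    have xw: "x \<otimes> w = z" using x z by (simp add: w_def m_assoc[symmetric])
    have "T x * T x * T w + T (x \<otimes> z) + T (z \<otimes> x) - T (x \<otimes> x) * T w - T z * T x - T z * T x = 0"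
      using P3[OF x x w] x w by (simp add: m_assoc xw)
    moreover have "T (z \<otimes> x) = T (x \<otimes> z)" using P2 x z by simp
    moreover have "T (x \<otimes> x) = (T x)^2 - 2" using P4[OF x] by (simp add: algebra_simps)
    ultimately have "2 * (T w + T (x \<otimes> z) - T x * T z) = 0"
      by (simp add: algebra_simps power2_eq_square)
    with two have "T w + T (x \<otimes> z) - T x * T z = 0" using mult_eq_0_iff by blast
    then show ?thesis by (simp add: w_def algebra_simps)
  qed
  with P1 show ?thesis unfolding rel_C_def by auto
qed

context
  fixes T :: "'a \<Rightarrow> 'c::idom"
  assumes C: "rel_C G T"
begin

lemma rel_C_one: "T \<one> = 2"
  using C unfolding rel_C_def by blast

lemma rel_C_mult:
  "a \<in> carrier G \<Longrightarrow> b \<in> carrier G \<Longrightarrow> T a * T b = T (a \<otimes> b) + T (inv a \<otimes> b)"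
  using C unfolding rel_C_def by blast

lemma rel_C_inv: "a \<in> carrier G \<Longrightarrow> T (inv a) = T a"
  using rel_C_mult[of a \<one>] by (simp add: rel_C_one mult_2_right)

lemma rel_C_commute:
  assumes a: "a \<in> carrier G" and b: "b \<in> carrier G"
  shows "T (a \<otimes> b) = T (b \<otimes> a)"
proof -
  have "T (inv b \<otimes> a) = T (inv a \<otimes> b)"
    using rel_C_inv[of "inv a \<otimes> b"] a b by (simp add: inv_mult_group)
  with rel_C_mult[OF a b] rel_C_mult[OF b a] show ?thesis
    by (simp add: mult.commute)
qed

lemma rel_C_inv_swap:
  assumes x: "x \<in> carrier G" and y: "y \<in> carrier G"
  shows "T (inv x \<otimes> y) = T (x \<otimes> inv y)"
proof -
  have "T (inv x \<otimes> y) = T (inv y \<otimes> x)"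
    using rel_C_inv[of "inv y \<otimes> x"] x y by (simp add: inv_mult_group)
  also have "\<dots> = T (x \<otimes> inv y)" using rel_C_commute x y by simp
  finally show ?thesis .
qed

lemma rel_C_cubic:
  assumes a: "a \<in> carrier G" and b: "b \<in> carrier G" and c: "c \<in> carrier G"
  shows "T a * T b * T c + T (a \<otimes> b \<otimes> c) + T (a \<otimes> c \<otimes> b)
        - T (a \<otimes> b) * T c - T (b \<otimes> c) * T a - T (a \<otimes> c) * T b = 0"
proof -
  have "T a * T b * T c = T a * T (b \<otimes> c) + T (a \<otimes> (inv b \<otimes> c)) + T (inv a \<otimes> (inv b \<otimes> c))"
    using rel_C_mult[OF b c] rel_C_mult[of a "inv b \<otimes> c"] a b c
    by (simp add: mult.assoc distrib_left)
  moreover have "T (a \<otimes> (inv b \<otimes> c)) = T (c \<otimes> a \<otimes> inv b)"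
    using rel_C_commute[of "a \<otimes> inv b" c] a b c by (simp add: m_assoc)
  moreover have "T (inv a \<otimes> (inv b \<otimes> c)) = T (b \<otimes> a \<otimes> inv c)"
    using rel_C_inv_swap[of "b \<otimes> a" c] a b c by (simp add: inv_mult_group m_assoc)
  moreover have "T (c \<otimes> a) * T b = T (c \<otimes> a \<otimes> b) + T (c \<otimes> a \<otimes> inv b)"
    using rel_C_mult[of "c \<otimes> a" b] rel_C_inv_swap[of "c \<otimes> a" b] a b c by simp
  moreover have "T (b \<otimes> a) * T c = T (b \<otimes> a \<otimes> c) + T (b \<otimes> a \<otimes> inv c)"
    using rel_C_mult[of "b \<otimes> a" c] rel_C_inv_swap[of "b \<otimes> a" c] a b c by simp
  moreover have "T (c \<otimes> a \<otimes> b) = T (a \<otimes> b \<otimes> c)"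
    using rel_C_commute[of c "a \<otimes> b"] a b c by (simp add: m_assoc)
  moreover have "T (b \<otimes> a \<otimes> c) = T (a \<otimes> c \<otimes> b)"
    using rel_C_commute[of b "a \<otimes> c"] a b c by (simp add: m_assoc)
  moreover have "T (c \<otimes> a) = T (a \<otimes> c)" "T (b \<otimes> a) = T (a \<otimes> b)"
    using rel_C_commute a b c by auto
  ultimately show ?thesis by (simp add: algebra_simps)
qed

lemma rel_C_imp_rel_P: "rel_P G T"
proof -
  have "(T g)^2 - T (g \<otimes> g) = 2" if g: "g \<in> carrier G" for g
    using rel_C_mult[OF g g] g by (simp add: rel_C_one power2_eq_square)
  then show ?thesis
    unfolding rel_P_def using rel_C_one rel_C_commute rel_C_cubic by blast
qed

end

end

theorem lemma3p2p2:
  fixes G :: "('g, 'm) monoid_scheme" and T :: "'g \<Rightarrow> 'b::idom"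
  assumes "group G"
    and "(2::'b) \<noteq> 0"
  shows "rel_P G T \<longleftrightarrow> rel_C G T"
  using group.rel_P_imp_rel_C group.rel_C_imp_rel_P assms by blast

end
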